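(* Let $G=(V,E)$ be an $\alpha_i$-metric graph ($i\ge 0$ an integer) and let $x,y$ be a pair of mutually distant vertices of $G$. Then every vertex $v\in V$ satisfies $\max\{d(x,v),d(y,v)\}\le e(v)\le \max\{d(x,v),d(y,v)\}+3i+2$.
   Context: All graphs are finite, connected, unweighted, undirected, simple; $d(u,v)$ is the shortest-path distance. $I(u,v)=\{x: d(u,x)+d(x,v)=d(u,v)\}$. A graph is $\alpha_i$-metric if for all vertices $u,v,w,x$: whenever $v\in I(u,w)$, $w\in I(v,x)$ and $v,w$ are adjacent, then $d(u,x)\ge d(u,v)+d(v,x)-i$. $e(v)=\max_u d(u,v)$. Vertices $x,y$ are mutually distant if $e(x)=e(y)=d(x,y)$. *)

theory Defs
  imports Main
begin

definition simple_graph :: "'a set \<Rightarrow> ('a \<Rightarrow> 'a \<Rightarrow> bool) \<Rightarrow> bool" where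
  "simple_graph V E \<longleftrightarrow> finite V \<and> V \<noteq> {} \<and>
     (\<forall>u v. E u v \<longrightarrow> u \<in> V \<and> v \<in> V) \<and>
     (\<forall>u v. E u v \<longrightarrow> E v u) \<and> (\<forall>u. \<not> E u u)"

definition is_walk :: "('a \<Rightarrow> 'a \<Rightarrow> bool) \<Rightarrow> 'a list \<Rightarrow> bool" where
  "is_walk E p \<longleftrightarrow> p \<noteq> [] \<and> (\<forall>k < length p - 1. E (p ! k) (p ! Suc k))"

definition walk_len :: "('a \<Rightarrow> 'a \<Rightarrow> bool) \<Rightarrow> 'a \<Rightarrow> 'a \<Rightarrow> nat \<Rightarrow> bool" where
  "walk_len E u v n \<longleftrightarrow> (\<exists>p. is_walk E p \<and> hd p = u \<and> last p = v \<and> length p = Suc n)"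

definition connected_graph :: "'a set \<Rightarrow> ('a \<Rightarrow> 'a \<Rightarrow> bool) \<Rightarrow> bool" where
  "connected_graph V E \<longleftrightarrow> (\<forall>u\<in>V. \<forall>v\<in>V. \<exists>n. walk_len E u v n)"

definition gdist :: "('a \<Rightarrow> 'a \<Rightarrow> bool) \<Rightarrow> 'a \<Rightarrow> 'a \<Rightarrow> nat" where
  "gdist E u v = (LEAST n. walk_len E u v n)"

definition interval :: "'a set \<Rightarrow> ('a \<Rightarrow> 'a \<Rightarrow> bool) \<Rightarrow> 'a \<Rightarrow> 'a \<Rightarrow> 'a set" where
  "interval V E u v = {x \<in> V. gdist E u x + gdist E x v = gdist E u v}"

definition alpha_metric :: "nat \<Rightarrow> 'a set \<Rightarrow> ('a \<Rightarrow> 'a \<Rightarrow> bool) \<Rightarrow> bool" where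
  "alpha_metric i V E \<longleftrightarrow>
     (\<forall>u\<in>V. \<forall>v\<in>V. \<forall>w\<in>V. \<forall>x\<in>V.
        v \<in> interval V E u w \<and> w \<in> interval V E v x \<and> E v w \<longrightarrow>
        int (gdist E u x) \<ge> int (gdist E u v) + int (gdist E v x) - int i)"

definition ecc :: "'a set \<Rightarrow> ('a \<Rightarrow> 'a \<Rightarrow> bool) \<Rightarrow> 'a \<Rightarrow> nat" where
  "ecc V E v = Max ((\<lambda>u. gdist E u v) ` V)"

definition mutually_distant :: "'a set \<Rightarrow> ('a \<Rightarrow> 'a \<Rightarrow> bool) \<Rightarrow> 'a \<Rightarrow> 'a \<Rightarrow> bool" where
  "mutually_distant V E x y \<longleftrightarrow>
     ecc V E x = ecc V E y \<and> ecc V E y = gdist E x y"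

end

theory Submission
  imports Defs
begin

text \<open>
  Let u be a vertex farthest from v and slice the interval I(v,u) into levels by the distance
  to v. Say that w is within k of a geodesic from a to b if d(a,w) + d(w,b) \<le> d(a,b) + k.
  In an \<open>\<alpha>\<^sub>i\<close>-metric graph every level has diameter at most i + 1, and a vertex of a level
  closest to x is within i of a geodesic from u to x or of one from v to x. Let l be the lowest
  level containing a vertex within i of a geodesic from u to x or from u to y. Since no vertex
  below l is within i of a geodesic from u, at level l or at level l - 1 there are a vertex p
  within i + 1 of a geodesic from u to x and a vertex c within i of a geodesic from v to y (or
  the same with x and y exchanged). Then d(u,x) \<le> d(x,y) \<le> d(x,p) + d(p,c) + d(c,y) with
  d(p,c) \<le> i + 1 gives d(v,u) \<le> d(v,y) + 3i + 2.
\<close>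

lemma walk_len_0: "walk_len E u v 0 \<longleftrightarrow> u = v"
proof
  assume "walk_len E u v 0"
  then obtain p where "hd p = u" "last p = v" "length p = 1"
    unfolding walk_len_def by auto
  then show "u = v" by (cases p) auto
next
  assume "u = v"
  then show "walk_len E u v 0"
    unfolding walk_len_def is_walk_def by (intro exI[of _ "[u]"]) simp
qed

lemma walk_len_Suc: "walk_len E u v (Suc n) \<longleftrightarrow> (\<exists>w. E u w \<and> walk_len E w v n)"
proof
  assume "walk_len E u v (Suc n)"
  then obtain p where p: "is_walk E p" "hd p = u" "last p = v" "length p = Suc (Suc n)"
    unfolding walk_len_def by auto
  then obtain q where pq: "p = u # q" by (cases p) auto
  with p have q: "q \<noteq> []" "length q = Suc n" "last q = v" by auto
  have "is_walk E q"
    using p(1) q(1) unfolding is_walk_def pq by (auto simp: less_diff_conv)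
  moreover have "E u (hd q)"
    using p(1,4) q(1) unfolding is_walk_def pq by (auto simp: hd_conv_nth)
  ultimately show "\<exists>w. E u w \<and> walk_len E w v n"
    using q unfolding walk_len_def by blast
next
  assume "\<exists>w. E u w \<and> walk_len E w v n"
  then obtain w q where e: "E u w" and q: "is_walk E q" "hd q = w" "last q = v" "length q = Suc n"
    unfolding walk_len_def by auto
  have "is_walk E (u # q)"
    unfolding is_walk_def
  proof (intro conjI allI impI)
    fix k assume k: "k < length (u # q) - 1"
    show "E ((u # q) ! k) ((u # q) ! Suc k)"
    proof (cases k)
      case 0
      then show ?thesis using e q by (cases q) auto
    next
      case (Suc k')
      then show ?thesis using q(1) k unfolding is_walk_def by simp
    qed
  qed simp
  then show "walk_len E u v (Suc n)"
    using q unfolding walk_len_def by (intro exI[of _ "u # q"]) auto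
qed

lemma walk_len_append: "walk_len E u v a \<Longrightarrow> walk_len E v w b \<Longrightarrow> walk_len E u w (a + b)"
proof (induction a arbitrary: u)
  case 0
  then show ?case by (simp add: walk_len_0)
next
  case (Suc a)
  then obtain z where "E u z" "walk_len E z v a" by (auto simp: walk_len_Suc)
  with Suc.IH[of z] Suc.prems show ?case by (auto simp: walk_len_Suc)
qed

lemma walk_len_rev:
  assumes "\<And>a b. E a b \<Longrightarrow> E b a" and "walk_len E u v n"
  shows "walk_len E v u n"
  using assms(2)
proof (induction n arbitrary: u)
  case 0
  then show ?case by (simp add: walk_len_0)
next
  case (Suc n)
  then obtain z where z: "E u z" "walk_len E z v n" by (auto simp: walk_len_Suc)
  have "walk_len E v z n" using Suc.IH z(2) .
  moreover have "walk_len E z u 1" using z(1) assms(1) by (auto simp: walk_len_Suc walk_len_0)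
  ultimately show ?case using walk_len_append by fastforce
qed

locale simple_connected_graph =
  fixes V :: "'a set" and E :: "'a \<Rightarrow> 'a \<Rightarrow> bool"
  assumes simple: "simple_graph V E" and connected: "connected_graph V E"
begin

abbreviation d :: "'a \<Rightarrow> 'a \<Rightarrow> nat" where "d \<equiv> gdist E"

lemma edge_sym: "E a b \<Longrightarrow> E b a"
  using simple unfolding simple_graph_def by blast

lemma edge_irrefl: "\<not> E a a"
  using simple unfolding simple_graph_def by blast

lemma edge_vertices: "E a b \<Longrightarrow> a \<in> V \<and> b \<in> V"
  using simple unfolding simple_graph_def by blast

lemma walk_len_gdist: "a \<in> V \<Longrightarrow> b \<in> V \<Longrightarrow> walk_len E a b (d a b)"
  using connected unfolding connected_graph_def gdist_def by (blast intro: LeastI)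

lemma gdist_le: "walk_len E a b n \<Longrightarrow> d a b \<le> n"
  unfolding gdist_def by (rule Least_le)

lemma gdist_le_rev: "a \<in> V \<Longrightarrow> b \<in> V \<Longrightarrow> d b a \<le> d a b"
  by (intro gdist_le walk_len_rev[OF edge_sym walk_len_gdist])

lemma gdist_sym: "a \<in> V \<Longrightarrow> b \<in> V \<Longrightarrow> d a b = d b a"
  using gdist_le_rev by (simp add: le_antisym)

lemma gdist_triangle: "a \<in> V \<Longrightarrow> b \<in> V \<Longrightarrow> c \<in> V \<Longrightarrow> d a c \<le> d a b + d b c"
  using gdist_le[OF walk_len_append[OF walk_len_gdist[of a b] walk_len_gdist[of b c]]] by blast

lemma gdist_self [simp]: "d a a = 0"
  using gdist_le[of a a 0] by (simp add: walk_len_0)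

lemma gdist_eq_0D: "a \<in> V \<Longrightarrow> b \<in> V \<Longrightarrow> d a b = 0 \<Longrightarrow> a = b"
  using walk_len_gdist[of a b] by (simp add: walk_len_0)

lemma gdist_edge: "E a b \<Longrightarrow> d a b = 1"
proof -
  assume e: "E a b"
  then have "d a b \<le> 1" by (intro gdist_le) (auto simp: walk_len_Suc walk_len_0)
  moreover have "d a b \<noteq> 0" using gdist_eq_0D edge_vertices edge_irrefl e by blast
  ultimately show ?thesis by simp
qed

lemma gdist_Suc_neighbour:
  assumes "a \<in> V" "b \<in> V" "d a b = Suc n"
  obtains c where "E a c" "d c b = n"
proof -
  obtain c where c: "E a c" "walk_len E c b n"
    using walk_len_gdist[OF assms(1,2)] assms(3) by (auto simp: walk_len_Suc)
  have "d a b \<le> d a c + d c b"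
    using gdist_triangle assms edge_vertices[OF c(1)] by blast
  then have "d c b = n" using gdist_le[OF c(2)] gdist_edge[OF c(1)] assms(3) by simp
  with c(1) show thesis by (rule that)
qed

lemma gdist_le_ecc: "a \<in> V \<Longrightarrow> d a b \<le> ecc V E b"
  using simple unfolding ecc_def simple_graph_def by simp

lemma ecc_le: "(\<And>a. a \<in> V \<Longrightarrow> d a b \<le> k) \<Longrightarrow> ecc V E b \<le> k"
  using simple unfolding ecc_def simple_graph_def by simp

end

locale alpha_metric_graph = simple_connected_graph +
  fixes i :: nat
  assumes alpha: "alpha_metric i V E"
begin

lemma alpha_metric_ineq:
  assumes "a \<in> V" "b \<in> V" "c \<in> V" "e \<in> V" "E b c"
    and "d a c = d a b + 1" and "d b e = d c e + 1"
  shows "d a b + d b e \<le> d a e + i"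
proof -
  have "b \<in> interval V E a c" "c \<in> interval V E b e"
    using assms gdist_edge[OF assms(5)] unfolding interval_def by simp_all
  then have "int (d a e) \<ge> int (d a b) + int (d b e) - int i"
    using alpha assms(1-5) unfolding alpha_metric_def by blast
  then show ?thesis by linarith
qed

lemma interval_predecessor:
  assumes "v \<in> V" "u \<in> V" "w \<in> interval V E v u" "d v w = Suc t"
  obtains p where "E p w" "p \<in> interval V E v u" "d v p = t"
proof -
  have w: "w \<in> V" "d v w + d w u = d v u" using assms(3) unfolding interval_def by auto
  have "d w v = Suc t" using gdist_sym[OF assms(1) w(1)] assms(4) by simp
  then obtain p where p: "E w p" "d p v = t"
    using gdist_Suc_neighbour[OF w(1) assms(1)] by blast
  have pV: "p \<in> V" using edge_vertices p(1) by blast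
  have "d p u \<le> d p w + d w u" "d v u \<le> d v p + d p u"
    using gdist_triangle pV w(1) assms(1,2) by blast+
  moreover have "d v p = t" "d p w = 1"
    using p gdist_sym[OF assms(1) pV] gdist_edge edge_sym by auto
  ultimately have "p \<in> interval V E v u" using pV w assms(4) unfolding interval_def by simp
  then show thesis using that edge_sym[OF p(1)] \<open>d v p = t\<close> by blast
qed

text \<open>If d(w,w') > i + 1, the \<open>\<alpha>\<^sub>i\<close>-metric inequality along the edge from the predecessor p
  of w forces d(p,w') \<ge> d(w,w'); by induction then d(p,p') = i + 1 = d(p,w') - 1, and the
  inequality fails along the edge from p' to w'.\<close>

lemma interval_level_gdist:
  assumes "v \<in> V" "u \<in> V" "w \<in> interval V E v u" "w' \<in> interval V E v u" "d v w = d v w'"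
  shows "d w w' \<le> i + 1"
  using assms(3-5)
proof (induction n \<equiv> "d v w" arbitrary: w w')
  case 0
  then show ?case using gdist_eq_0D assms(1) unfolding interval_def by fastforce
next
  case (Suc t)
  have w: "w \<in> V" "d v w + d w u = d v u" and w': "w' \<in> V" "d v w' + d w' u = d v u"
    using Suc.prems unfolding interval_def by auto
  show ?case
  proof (rule ccontr)
    assume far: "\<not> d w w' \<le> i + 1"
    have "d v w = Suc t" "d v w' = Suc t" using Suc.hyps(2) Suc.prems(3) by simp_all
    obtain p where p: "E p w" "p \<in> interval V E v u" "d v p = t"
      using interval_predecessor[OF assms(1,2) Suc.prems(1) \<open>d v w = Suc t\<close>] by blast
    obtain p' where p': "E p' w'" "p' \<in> interval V E v u" "d v p' = t"
      using interval_predecessor[OF assms(1,2) Suc.prems(2) \<open>d v w' = Suc t\<close>] by blast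
    have pV: "p \<in> V" "d p u = d w u + 1" and p'V: "p' \<in> V" "d p' u = d w' u + 1"
      using p p' w w' Suc.hyps(2) Suc.prems(3) unfolding interval_def by auto
    have pp': "d p p' \<le> i + 1" using Suc.hyps(1) p p' by simp
    have sym: "d w' w = d w w'" "d w' p = d p w'" using gdist_sym w w' pV by auto
    have tri: "d w' w \<le> d w' p + d p w" "d p w' \<le> d p p' + d p' w'"
      using gdist_triangle w w' pV p'V by blast+
    have "d w w' \<le> d p w'"
    proof (rule ccontr)
      assume "\<not> d w w' \<le> d p w'"
      then have step: "d w' w = d w' p + 1" using tri sym gdist_edge[OF p(1)] by linarith
      then have "d w' p + d p u \<le> d w' u + i"
        using alpha_metric_ineq[OF w'(1) pV(1) w(1) assms(2) p(1)] pV(2) by simp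
      then show False using w w' Suc.prems(3) pV(2) sym far step by linarith
    qed
    then have step: "d p w' = d p p' + 1" using tri pp' gdist_edge[OF p'(1)] far by linarith
    then have "d p p' + d p' u \<le> d p u + i"
      using alpha_metric_ineq[OF pV(1) p'V(1) w'(1) assms(2) p'(1)] p'V(2) by simp
    then show False using pV(2) p'V(2) w(2) w'(2) Suc.prems(3) far step \<open>d w w' \<le> d p w'\<close>
      by linarith
  qed
qed

text \<open>Step from w to a neighbour r closer to x: unless r stays on the same level of I(v,u),
  it moves away from v or from u, and the \<open>\<alpha>\<^sub>i\<close>-metric inequality applies to v, w, r, x or
  to u, w, r, x.\<close>

lemma interval_level_closest_near:
  assumes "v \<in> V" "u \<in> V" "x \<in> V" "w \<in> interval V E v u"
    and closest: "\<And>w'. w' \<in> interval V E v u \<Longrightarrow> d v w' = d v w \<Longrightarrow> d w x \<le> d w' x"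
  shows "d u w + d w x \<le> d u x + i \<or> d v w + d w x \<le> d v x + i"
proof (cases "d w x")
  case 0
  then show ?thesis using gdist_eq_0D assms(3,4) unfolding interval_def by fastforce
next
  case (Suc n)
  have w: "w \<in> V" "d v w + d w u = d v u" using assms(4) unfolding interval_def by auto
  obtain r where r: "E w r" "d r x = n" using gdist_Suc_neighbour[OF w(1) assms(3) Suc] by blast
  have rV: "r \<in> V" using edge_vertices r(1) by blast
  have wr: "d w r = 1" "d r w = 1" using gdist_edge r(1) edge_sym by auto
  have tri: "d v r \<le> d v w + d w r" "d u r \<le> d u w + d w r" "d r u \<le> d r w + d w u"
    "d v u \<le> d v r + d r u"
    using gdist_triangle assms(1,2) w(1) rV by blast+
  have sym: "d u r = d r u" "d u w = d w u" using gdist_sym assms(2) rV w(1) by auto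
  consider "d v r = d v w + 1" | "d u r = d u w + 1" | "d v r + d r u = d v u" "d v r = d v w"
    using tri sym wr w(2) by linarith
  then show ?thesis
  proof cases
    case 1
    then show ?thesis using alpha_metric_ineq[OF assms(1) w(1) rV assms(3) r(1)] Suc r(2) by simp
  next
    case 2
    then show ?thesis using alpha_metric_ineq[OF assms(2) w(1) rV assms(3) r(1)] Suc r(2) by simp
  next
    case 3
    then have "d w x \<le> d r x" using closest rV unfolding interval_def by simp
    then show ?thesis using Suc r(2) by simp
  qed
qed

lemma interval_level_near_vertex:
  assumes "v \<in> V" "u \<in> V" "x \<in> V" "w \<in> interval V E v u"
  obtains c where "c \<in> interval V E v u" "d v c = d v w"
    "d u c + d c x \<le> d u x + i \<or> d v c + d c x \<le> d v x + i"
proof -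
  obtain c where c: "c \<in> interval V E v u \<and> d v c = d v w"
    and closest: "\<And>w'. w' \<in> interval V E v u \<and> d v w' = d v w \<Longrightarrow> d c x \<le> d w' x"
    using ex_has_least_nat[of "\<lambda>c. c \<in> interval V E v u \<and> d v c = d v w" w "\<lambda>c. d c x"]
      assms(4) by blast
  from c have "d u c + d c x \<le> d u x + i \<or> d v c + d c x \<le> d v x + i"
    by (intro interval_level_closest_near[OF assms(1-3)]) (auto intro: closest)
  with c show thesis using that by blast
qed

lemma interval_lower_level_near_vertex:
  assumes "v \<in> V" "u \<in> V" "x \<in> V" "w \<in> interval V E v u" "d v w = Suc t"
    and "\<And>c. c \<in> interval V E v u \<Longrightarrow> d v c = t \<Longrightarrow> \<not> d u c + d c x \<le> d u x + i"
  obtains c where "c \<in> interval V E v u" "d v c = t" "d v c + d c x \<le> d v x + i"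
proof -
  obtain p where "p \<in> interval V E v u" "d v p = t"
    using interval_predecessor[OF assms(1,2,4,5)] by blast
  then obtain c where "c \<in> interval V E v u" "d v c = t"
    "d u c + d c x \<le> d u x + i \<or> d v c + d c x \<le> d v x + i"
    using interval_level_near_vertex[OF assms(1-3)] by metis
  then show thesis using that assms(6) by blast
qed

lemma interval_level_pair_bound:
  assumes "v \<in> V" "u \<in> V" "x \<in> V" "y \<in> V"
    and "p \<in> interval V E v u" "c \<in> interval V E v u" "d v p = d v c"
    and "d u p + d p x \<le> d u x + k" "d v c + d c y \<le> d v y + i" and "d u x \<le> d x y"
  shows "d v u \<le> d v y + 2 * i + k + 1"
proof -
  have p: "p \<in> V" "d v p + d p u = d v u" and c: "c \<in> V"
    using assms(5,6) unfolding interval_def by auto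
  have "d p c \<le> i + 1" using interval_level_gdist assms(1,2,5-7) by blast
  moreover have "d x y \<le> d x p + d p y" "d p y \<le> d p c + d c y"
    using gdist_triangle assms(3,4) p(1) c by blast+
  moreover have "d u p = d p u" "d x p = d p x" using gdist_sym assms(2,3) p(1) by auto
  ultimately show ?thesis using assms(7-10) p(2) by linarith
qed

text \<open>The predecessor z of w is no farther from x than w, since otherwise the
  \<open>\<alpha>\<^sub>i\<close>-metric inequality would put w within i of a geodesic from v to x; hence z lies
  within i + 1 of a geodesic from u to x.\<close>

lemma interval_lower_level_bound:
  assumes "v \<in> V" "u \<in> V" "x \<in> V" "y \<in> V" "w \<in> interval V E v u"
    and "d u w + d w x \<le> d u x + i" "\<not> d v w + d w x \<le> d v x + i"
    and "\<And>c. c \<in> interval V E v u \<Longrightarrow> Suc (d v c) = d v w \<Longrightarrow> \<not> d u c + d c y \<le> d u y + i"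
    and "d u x \<le> d x y"
  shows "d v u \<le> d v y + 3 * i + 2"
proof -
  have w: "w \<in> V" using assms(5) unfolding interval_def by auto
  have "w \<noteq> v" using assms(7) by auto
  then obtain t where t: "d v w = Suc t"
    using gdist_eq_0D[OF assms(1) w] not0_implies_Suc by blast
  obtain c where c: "c \<in> interval V E v u" "d v c = t" "d v c + d c y \<le> d v y + i"
    using interval_lower_level_near_vertex[OF assms(1,2,4,5) t] assms(8) t by auto
  obtain z where z: "E z w" "z \<in> interval V E v u" "d v z = t"
    using interval_predecessor[OF assms(1,2,5) t] by blast
  have zV: "z \<in> V" using edge_vertices z(1) by blast
  have "d z x \<le> d z w + d w x" using gdist_triangle zV w assms(3) by blast
  moreover have "\<not> d z x = d w x + 1"
  proof
    assume "d z x = d w x + 1"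
    then have "d v z + d z x \<le> d v x + i"
      using alpha_metric_ineq[OF assms(1) zV w assms(3) z(1)] t z(3) by simp
    then show False using assms(7) t z(3) \<open>d z x = d w x + 1\<close> by linarith
  qed
  moreover have "d u z \<le> d u w + d w z" using gdist_triangle assms(2) zV w by blast
  moreover have "d z w = 1" "d w z = 1" using gdist_edge z(1) edge_sym by auto
  ultimately have z_near: "d u z + d z x \<le> d u x + (i + 1)" using assms(6) by linarith
  have "d v z = d v c" using z(3) c(2) by simp
  from interval_level_pair_bound[OF assms(1-4) z(2) c(1) this z_near c(3) assms(9)]
  show ?thesis by simp
qed

lemma gdist_le_max_add:
  assumes "v \<in> V" "u \<in> V" "x \<in> V" "y \<in> V" and "d u x \<le> d x y" "d u y \<le> d y x"
  shows "d v u \<le> max (d v x) (d v y) + 3 * i + 2"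
proof -
  define near_u where "near_u w \<longleftrightarrow> w \<in> interval V E v u \<and>
    (d u w + d w x \<le> d u x + i \<or> d u w + d w y \<le> d u y + i)" for w
  have "near_u u" using assms(1,2) unfolding near_u_def interval_def by simp
  then obtain w0 where w0: "near_u w0" and lowest: "\<And>w. near_u w \<Longrightarrow> d v w0 \<le> d v w"
    using ex_has_least_nat[of near_u u "d v"] by blast
  have w0I: "w0 \<in> interval V E v u" using w0 unfolding near_u_def by blast
  have below_w0: "\<not> d u c + d c x \<le> d u x + i" "\<not> d u c + d c y \<le> d u y + i"
    if "c \<in> interval V E v u" "Suc (d v c) = d v w0" for c
    using lowest[of c] that unfolding near_u_def by auto
  obtain wx where wx: "wx \<in> interval V E v u" "d v wx = d v w0"
    "d u wx + d wx x \<le> d u x + i \<or> d v wx + d wx x \<le> d v x + i"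
    using interval_level_near_vertex[OF assms(1-3) w0I] by blast
  obtain wy where wy: "wy \<in> interval V E v u" "d v wy = d v w0"
    "d u wy + d wy y \<le> d u y + i \<or> d v wy + d wy y \<le> d v y + i"
    using interval_level_near_vertex[OF assms(1,2,4) w0I] by blast
  consider "d v wx + d wx x \<le> d v x + i" "d v wy + d wy y \<le> d v y + i"
    | "\<not> d v wx + d wx x \<le> d v x + i" | "\<not> d v wy + d wy y \<le> d v y + i"
    by blast
  then show ?thesis
  proof cases
    case 1
    from w0 have "d u w0 + d w0 x \<le> d u x + i \<or> d u w0 + d w0 y \<le> d u y + i"
      unfolding near_u_def by blast
    then show ?thesis
    proof
      assume "d u w0 + d w0 x \<le> d u x + i"
      then have "d v u \<le> d v y + 2 * i + i + 1"
        using interval_level_pair_bound[OF assms(1-4) w0I wy(1), where k = i] wy(2) 1(2) assms(5)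
        by simp
      then show ?thesis by simp
    next
      assume "d u w0 + d w0 y \<le> d u y + i"
      then have "d v u \<le> d v x + 2 * i + i + 1"
        using interval_level_pair_bound[OF assms(1,2,4,3) w0I wx(1), where k = i] wx(2) 1(1) assms(6)
        by simp
      then show ?thesis by simp
    qed
  next
    case 2
    then have "d v u \<le> d v y + 3 * i + 2"
      using interval_lower_level_bound[OF assms(1-4) wx(1)] wx(2,3) below_w0(2) assms(5) by simp
    then show ?thesis by simp
  next
    case 3
    then have "d v u \<le> d v x + 3 * i + 2"
      using interval_lower_level_bound[OF assms(1,2,4,3) wy(1)] wy(2,3) below_w0(1) assms(6) by simp
    then show ?thesis by simp
  qed
qed

end

theorem lemma14:
  fixes V :: "'a set" and E :: "'a \<Rightarrow> 'a \<Rightarrow> bool" and i :: nat and x y v :: 'a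
  assumes "simple_graph V E" and "connected_graph V E"
    and "alpha_metric i V E"
    and "x \<in> V" and "y \<in> V" and "mutually_distant V E x y"
    and "v \<in> V"
  shows "max (gdist E x v) (gdist E y v) \<le> ecc V E v
       \<and> ecc V E v \<le> max (gdist E x v) (gdist E y v) + 3 * i + 2"
proof -
  interpret alpha_metric_graph V E i using assms(1-3) by unfold_locales
  have ecc_xy: "ecc V E x = d x y" "ecc V E y = d y x"
    using assms(4-6) gdist_sym unfolding mutually_distant_def by auto
  have "d u v \<le> max (d x v) (d y v) + 3 * i + 2" if "u \<in> V" for u
  proof -
    have "d u x \<le> d x y" "d u y \<le> d y x"
      using gdist_le_ecc[OF that, of x] gdist_le_ecc[OF that, of y] ecc_xy by simp_all
    then have "d v u \<le> max (d v x) (d v y) + 3 * i + 2"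
      using gdist_le_max_add[OF assms(7) that assms(4,5)] by blast
    then show ?thesis using gdist_sym that assms(4,5,7) by simp
  qed
  then show ?thesis using gdist_le_ecc ecc_le assms(4,5) by simp
qed

end
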